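(* Let $\mathcal{H}$ be a real Hilbert space, $N\ge2$, $\theta\in(0,1)$, $\Gamma\subseteq\mathbb{R}_{++}$ a nonempty closed interval, and for $\gamma\in\Gamma$ let $T_\gamma:\mathcal{H}^{N-1}\to\mathcal{H}^{N-1}$ be the Malitsky--Tam operator defined in the context. Suppose one of the following holds: (a) $A_1,\dots,A_{N-1}:\mathcal{H}\to\mathcal{H}$ are monotone and $L$-Lipschitz, and $A_N:\mathcal{H}\rightrightarrows\mathcal{H}$ is maximally $\mu$-strongly monotone; (b) $A_1,\dots,A_{N-1}:\mathcal{H}\to\mathcal{H}$ are maximally $\mu$-strongly monotone and $L$-Lipschitz, and $A_N:\mathcal{H}\rightrightarrows\mathcal{H}$ is maximally monotone. Then there exists $\beta\in[0,1)$ such that every $T_\gamma$, $\gamma\in\Gamma$, is a $\beta$-contraction.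
   Context: $J_A=(\mathrm{Id}+A)^{-1}$. Malitsky--Tam operator: for $\mathbf{x}=(x^1,\dots,x^{N-1})\in\mathcal{H}^{N-1}$, set $z^1=J_{\gamma A_1}x^1$, $z^i=J_{\gamma A_i}(z^{i-1}+x^i-x^{i-1})$ for $i=2,\dots,N-1$, $z^N=J_{\gamma A_N}(z^1+z^{N-1}-x^{N-1})$, and $T_\gamma\mathbf{x}=\mathbf{x}+\theta(z^2-z^1,\dots,z^N-z^{N-1})$. An operator $A$ is $\mu$-strongly monotone if $\langle x-y,u-v\rangle\ge\mu\|x-y\|^2$ for all $(x,u),(y,v)\in\operatorname{gra}A$. A $\beta$-contraction satisfies $\|T\mathbf{x}-T\mathbf{y}\|\le\beta\|\mathbf{x}-\mathbf{y}\|$ in the product norm of $\mathcal{H}^{N-1}$. *)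

theory Defs
  imports "HOL-Analysis.Analysis"
begin

definition gra :: "('a \<Rightarrow> 'a set) \<Rightarrow> ('a \<times> 'a) set" where
  "gra A = {(x, u). u \<in> A x}"

definition monotone_op :: "('a::real_inner \<Rightarrow> 'a set) \<Rightarrow> bool" where
  "monotone_op A \<longleftrightarrow> (\<forall>x y u v. u \<in> A x \<longrightarrow> v \<in> A y \<longrightarrow> inner (x - y) (u - v) \<ge> 0)"

definition strongly_monotone_op :: "real \<Rightarrow> ('a::real_inner \<Rightarrow> 'a set) \<Rightarrow> bool" where
  "strongly_monotone_op \<mu> A \<longleftrightarrow>
     (\<forall>x y u v. u \<in> A x \<longrightarrow> v \<in> A y \<longrightarrow> inner (x - y) (u - v) \<ge> \<mu> * (norm (x - y))\<^sup>2)"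

definition maximally_monotone_op :: "('a::real_inner \<Rightarrow> 'a set) \<Rightarrow> bool" where
  "maximally_monotone_op A \<longleftrightarrow> monotone_op A \<and>
     (\<forall>B. monotone_op B \<and> gra A \<subseteq> gra B \<longrightarrow> gra B = gra A)"

definition maximally_strongly_monotone_op :: "real \<Rightarrow> ('a::real_inner \<Rightarrow> 'a set) \<Rightarrow> bool" where
  "maximally_strongly_monotone_op \<mu> A \<longleftrightarrow> strongly_monotone_op \<mu> A \<and> maximally_monotone_op A"

text \<open>Resolvent of gamma A: J(x) = (Id + gamma A)^{-1}(x), i.e. the unique z with x \<in> z + gamma A z
  (single-valued and everywhere defined for maximally monotone A).\<close>
definition resolvent :: "real \<Rightarrow> ('a::real_vector \<Rightarrow> 'a set) \<Rightarrow> 'a \<Rightarrow> 'a" where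
  "resolvent \<gamma> A x = (THE z. \<exists>u \<in> A z. x = z + \<gamma> *\<^sub>R u)"

text \<open>Points of H^{N-1} are functions nat \<Rightarrow> 'a, only indices 1..N-1 being relevant.
  mt_zpre computes z^1, ..., z^{N-1}.\<close>
primrec mt_zpre :: "real \<Rightarrow> (nat \<Rightarrow> 'a::real_vector \<Rightarrow> 'a set) \<Rightarrow> (nat \<Rightarrow> 'a) \<Rightarrow> nat \<Rightarrow> 'a" where
  "mt_zpre \<gamma> A x 0 = 0"
| "mt_zpre \<gamma> A x (Suc i) =
     (if i = 0 then resolvent \<gamma> (A 1) (x 1)
      else resolvent \<gamma> (A (Suc i)) (mt_zpre \<gamma> A x i + x (Suc i) - x i))"

definition mt_z :: "nat \<Rightarrow> real \<Rightarrow> (nat \<Rightarrow> 'a::real_vector \<Rightarrow> 'a set) \<Rightarrow> (nat \<Rightarrow> 'a) \<Rightarrow> nat \<Rightarrow> 'a" where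
  "mt_z N \<gamma> A x i =
     (if i = N then resolvent \<gamma> (A N) (mt_zpre \<gamma> A x 1 + mt_zpre \<gamma> A x (N - 1) - x (N - 1))
      else mt_zpre \<gamma> A x i)"

definition malitsky_tam :: "nat \<Rightarrow> real \<Rightarrow> real \<Rightarrow> (nat \<Rightarrow> 'a::real_vector \<Rightarrow> 'a set) \<Rightarrow> (nat \<Rightarrow> 'a) \<Rightarrow> (nat \<Rightarrow> 'a)" where
  "malitsky_tam N \<theta> \<gamma> A x =
     (\<lambda>i. if i \<in> {1..N - 1} then x i + \<theta> *\<^sub>R (mt_z N \<gamma> A x (Suc i) - mt_z N \<gamma> A x i) else 0)"

definition prod_norm :: "nat \<Rightarrow> (nat \<Rightarrow> 'a::real_normed_vector) \<Rightarrow> real" where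
  "prod_norm N x = sqrt (\<Sum>i\<in>{1..N - 1}. (norm (x i))\<^sup>2)"

end

theory Submission
  imports Defs
begin

text \<open>
  Fix \<open>\<gamma>\<close> and two points; let \<open>X\<close>, \<open>Z\<close> and \<open>U\<close> be the differences of the inputs, of the
  resolvent outputs \<open>z\<^sub>i\<close> and of the residuals \<open>u\<^sub>i \<in> A\<^sub>i z\<^sub>i\<close>. The resolvent steps are linear
  relations between inputs, outputs and residuals, so \<open>(X, Z, U)\<close> satisfies them as well, and
  summation by parts yields Malitsky and Tam's identity: the squared norm of the difference of
  the images equals \<open>\<parallel>X\<parallel>\<^sup>2\<close> minus \<open>\<theta>(1 - \<theta>)\<close> times the squared increments of \<open>Z\<close>, minus
  \<open>\<theta>\<parallel>Z\<^sub>1 - Z\<^sub>N\<parallel>\<^sup>2\<close>, minus \<open>2\<theta>\<gamma>\<close> times \<open>\<Sum>\<langle>Z\<^sub>i, U\<^sub>i\<rangle>\<close>. Monotonicity makes every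
  \<open>\<langle>Z\<^sub>i, U\<^sub>i\<rangle>\<close> nonnegative, and strong monotonicity (of \<open>A\<^sub>N\<close>, or of all the other operators)
  makes the decrease at least a fixed multiple of \<open>\<parallel>Z\<^sub>1\<parallel>\<^sup>2 + \<dots> + \<parallel>Z\<^sub>N\<^sub>-\<^sub>1\<parallel>\<^sup>2\<close>, while Lipschitz
  continuity bounds \<open>\<parallel>X\<parallel>\<^sup>2\<close> by a multiple of the same quantity; all constants are uniform in
  \<open>\<gamma> \<in> [a, b]\<close>.

  That the resolvents are defined at all is Minty's theorem, which reduces to this: for a
  monotone set \<open>M\<close> of pairs there is a \<open>q\<close> with \<open>\<langle>q - x, q + v\<rangle> \<le> 0\<close> for all \<open>(x, v) \<in> M\<close>.
  For finite \<open>M\<close>, minimize the largest of these strongly convex quadratics: at the minimizer,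
  \<open>0\<close> is a convex combination of the gradients of the active ones, and monotonicity makes the
  optimal value nonpositive. In general, the minimizers along an increasing chain of finite
  subsets whose optimal values approach their supremum form a Cauchy sequence, and its limit
  works for all of \<open>M\<close>.
\<close>

lemma Cauchy_if_dist_le_vanishing:
  fixes s :: "nat \<Rightarrow> 'a::metric_space"
  assumes "\<delta> \<longlonglongrightarrow> 0" and "\<And>N m n. N \<le> m \<Longrightarrow> N \<le> n \<Longrightarrow> dist (s m) (s n) \<le> \<delta> N"
  shows "Cauchy s"
proof (rule metric_CauchyI)
  fix e :: real assume "0 < e"
  then obtain N where "\<delta> N < e"
    using order_tendstoD(2)[OF assms(1)] by (meson eventually_sequentially order.refl)
  then show "\<exists>N. \<forall>m\<ge>N. \<forall>n\<ge>N. dist (s m) (s n) < e" using assms(2) by (meson order.strict_trans1)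
qed

lemma midpoint_strongly_convex_attains_min:
  fixes \<phi> :: "'a::{real_normed_vector,complete_space} \<Rightarrow> real"
  assumes bdd: "bdd_below (range \<phi>)"
    and mid: "\<And>p q. \<phi> ((1/2) *\<^sub>R (p + q)) \<le> (\<phi> p + \<phi> q) / 2 - (norm (p - q))\<^sup>2 / 4"
    and lsc: "\<And>d. closed {q. \<phi> q \<le> d}"
  shows "\<exists>q0. \<forall>q. \<phi> q0 \<le> \<phi> q"
proof -
  define m where "m = Inf (range \<phi>)"
  have m_le: "m \<le> \<phi> q" for q unfolding m_def by (rule cInf_lower[OF _ bdd]) auto
  have "\<exists>q. \<phi> q < m + 1 / Suc n" for n
    using cInf_less_iff[OF _ bdd, of "m + 1 / Suc n"] by (simp add: m_def)
  then obtain s where s: "\<And>n. \<phi> (s n) < m + 1 / Suc n" by metis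
  have "dist (s i) (s j) \<le> 2 * sqrt (1 / Suc N)" if "N \<le> i" "N \<le> j" for N i j
  proof -
    have "(norm (s i - s j))\<^sup>2 \<le> 2 * (\<phi> (s i) + \<phi> (s j)) - 4 * m"
      using m_le[of "(1/2) *\<^sub>R (s i + s j)"] mid[of "s i" "s j"] by linarith
    also have "\<dots> \<le> 2 * (1 / Suc i + 1 / Suc j)" using s[of i] s[of j] by simp
    also have "\<dots> \<le> 2 * (1 / Suc N + 1 / Suc N)"
      using that by (intro mult_left_mono add_mono) (auto simp: frac_le)
    also have "\<dots> = (2 * sqrt (1 / Suc N))\<^sup>2" by (simp add: power_mult_distrib)
    finally show ?thesis unfolding dist_norm by (rule power2_le_imp_le) simp
  qed
  moreover have "(\<lambda>N. 2 * sqrt (1 / real (Suc N))) \<longlonglongrightarrow> 2 * sqrt 0"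
    by (intro tendsto_intros LIMSEQ_Suc[OF lim_1_over_n])
  ultimately have "Cauchy s"
    by (intro Cauchy_if_dist_le_vanishing[where \<delta> = "\<lambda>N. 2 * sqrt (1 / Suc N)"]) auto
  then obtain l where l: "s \<longlonglongrightarrow> l" using Cauchy_convergent_iff convergent_def by blast
  have "\<phi> l \<le> m + e" if "0 < e" for e
  proof -
    obtain N where "1 / Suc N < e" using \<open>0 < e\<close> nat_approx_posE by blast
    have "\<phi> (s n) \<le> m + e" if "N \<le> n" for n
    proof -
      have "1 / Suc n \<le> 1 / Suc N" using that by (simp add: frac_le)
      then show ?thesis using s[of n] \<open>1 / Suc N < e\<close> by linarith
    qed
    then have "eventually (\<lambda>n. s n \<in> {q. \<phi> q \<le> m + e}) sequentially"
      by (auto simp: eventually_sequentially)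
    then show ?thesis using Lim_in_closed_set[OF lsc _ _ l] by simp
  qed
  then have "\<phi> l \<le> m" by (rule field_le_epsilon)
  then show ?thesis using m_le by (meson order_trans)
qed

lemma convex_hull_image_finite_weights:
  fixes g :: "'b \<Rightarrow> 'a::real_vector"
  assumes "finite K" "y \<in> convex hull (g ` K)"
  shows "\<exists>l. (\<forall>k\<in>K. 0 \<le> l k) \<and> sum l K = 1 \<and> (\<Sum>k\<in>K. l k *\<^sub>R g k) = y"
proof -
  obtain u where u: "\<forall>z\<in>g ` K. 0 \<le> u z" "sum u (g ` K) = 1" "(\<Sum>z\<in>g ` K. u z *\<^sub>R z) = y"
    using assms convex_hull_finite[of "g ` K"] by auto
  (* the weight of a point of g ` K is shared evenly among its preimages *)
  define l where "l k = u (g k) / card {j\<in>K. g j = g k}" for k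
  have fibre: "(\<Sum>k\<in>{j\<in>K. g j = z}. l k *\<^sub>R h (g k)) = u z *\<^sub>R h z"
    if "z \<in> g ` K" for z and h :: "'a \<Rightarrow> 'c::real_vector"
  proof -
    have "card {j\<in>K. g j = z} \<noteq> 0" using that assms(1) by auto
    then show ?thesis by (simp add: l_def scaleR_sum_left[symmetric])
  qed
  have "(\<Sum>k\<in>K. l k *\<^sub>R h (g k)) = (\<Sum>z\<in>g ` K. u z *\<^sub>R h z)" for h :: "'a \<Rightarrow> 'c::real_vector"
    using sum.image_gen[OF assms(1), of "\<lambda>k. l k *\<^sub>R h (g k)" g] fibre by (auto intro: sum.cong)
  from this[of "\<lambda>_. 1::real"] this[of id] u show ?thesis
    using u(1) by (intro exI[of _ l]) (auto simp: l_def)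
qed

lemma ex_ge_convex_comb:
  fixes f :: "'b \<Rightarrow> real"
  assumes "finite K" "K \<noteq> {}" "\<forall>k\<in>K. 0 \<le> l k" "sum l K = 1"
  shows "\<exists>k\<in>K. (\<Sum>j\<in>K. l j * f j) \<le> f k"
proof -
  have "Max (f ` K) \<in> f ` K" using assms(1,2) by simp
  then obtain k where k: "k \<in> K" "f k = Max (f ` K)" by auto
  then have "\<forall>j\<in>K. f j \<le> f k" using assms(1) by simp
  have "(\<Sum>j\<in>K. l j * f j) \<le> (\<Sum>j\<in>K. l j * f k)"
    using assms(3) \<open>\<forall>j\<in>K. f j \<le> f k\<close> by (intro sum_mono mult_left_mono) auto
  then show ?thesis using k(1) assms(4) by (auto simp: sum_distrib_right[symmetric])
qed

section \<open>Minty's theorem\<close>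

definition monotone_set :: "('a::real_inner \<times> 'a) set \<Rightarrow> bool" where
  "monotone_set M \<longleftrightarrow> (\<forall>k\<in>M. \<forall>j\<in>M. 0 \<le> inner (fst k - fst j) (snd k - snd j))"

lemma monotone_set_subset: "monotone_set M \<Longrightarrow> F \<subseteq> M \<Longrightarrow> monotone_set F"
  unfolding monotone_set_def by blast

(* monotone_gap (x, v) q \<le> 0 says that (q, -q) is monotonically related to (x, v). *)
definition monotone_gap :: "'a::real_inner \<times> 'a \<Rightarrow> 'a \<Rightarrow> real" where
  "monotone_gap k q = inner (q - fst k) (q + snd k)"

lemma monotone_gap_add:
  "monotone_gap k (q + h) = monotone_gap k q + inner h (2 *\<^sub>R q + snd k - fst k) + (norm h)\<^sup>2"
  unfolding monotone_gap_def power2_norm_eq_inner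
  by (simp add: inner_commute scaleR_2 algebra_simps)

lemma monotone_gap_midpoint:
  "monotone_gap k ((1/2) *\<^sub>R (p + q)) = (monotone_gap k p + monotone_gap k q) / 2 - (norm (p - q))\<^sup>2 / 4"
  unfolding monotone_gap_def power2_norm_eq_inner
  by (simp add: inner_commute algebra_simps) (simp add: field_simps)

lemma monotone_gap_lower_bound:
  "- (norm (snd k - fst k))\<^sup>2 / 4 - inner (fst k) (snd k) \<le> monotone_gap k q"
proof -
  have "monotone_gap k q
      = (norm (q + (1/2) *\<^sub>R (snd k - fst k)))\<^sup>2 - (norm (snd k - fst k))\<^sup>2 / 4 - inner (fst k) (snd k)"
    unfolding monotone_gap_def power2_norm_eq_inner
    by (simp add: inner_commute algebra_simps) (simp add: field_simps)
  then show ?thesis by simp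
qed

lemma continuous_on_monotone_gap: "continuous_on S (monotone_gap k)"
  unfolding monotone_gap_def by (intro continuous_intros)

definition max_gap :: "('a::real_inner \<times> 'a) set \<Rightarrow> 'a \<Rightarrow> real" where
  "max_gap F q = Max ((\<lambda>k. monotone_gap k q) ` F)"

lemma monotone_gap_le_max_gap: "finite F \<Longrightarrow> k \<in> F \<Longrightarrow> monotone_gap k q \<le> max_gap F q"
  unfolding max_gap_def by (rule Max_ge) auto

lemma max_gap_attained: "finite F \<Longrightarrow> F \<noteq> {} \<Longrightarrow> \<exists>k\<in>F. max_gap F q = monotone_gap k q"
proof -
  assume "finite F" "F \<noteq> {}"
  then have "max_gap F q \<in> (\<lambda>k. monotone_gap k q) ` F" unfolding max_gap_def by (intro Max_in) auto
  then show ?thesis by auto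
qed

lemma max_gap_attains_min:
  fixes F :: "('a::{real_inner,complete_space} \<times> 'a) set"
  assumes "finite F" "F \<noteq> {}"
  shows "\<exists>q0. \<forall>q. max_gap F q0 \<le> max_gap F q"
proof (rule midpoint_strongly_convex_attains_min)
  obtain k where k: "k \<in> F" using assms(2) by blast
  show "bdd_below (range (max_gap F))"
    using monotone_gap_lower_bound[of k] monotone_gap_le_max_gap[OF assms(1) k]
    by (intro bdd_belowI2) (rule order_trans)
next
  fix p q :: 'a
  obtain k where "k \<in> F" "max_gap F ((1/2) *\<^sub>R (p + q)) = monotone_gap k ((1/2) *\<^sub>R (p + q))"
    using max_gap_attained[OF assms] by blast
  moreover have "monotone_gap k p \<le> max_gap F p" "monotone_gap k q \<le> max_gap F q"
    using monotone_gap_le_max_gap[OF assms(1) \<open>k \<in> F\<close>] by auto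
  ultimately show "max_gap F ((1/2) *\<^sub>R (p + q)) \<le> (max_gap F p + max_gap F q) / 2 - (norm (p - q))\<^sup>2 / 4"
    using monotone_gap_midpoint[of k p q] by argo
next
  fix d
  have "{q. max_gap F q \<le> d} = (\<Inter>k\<in>F. {q. monotone_gap k q \<le> d})"
    using assms by (auto simp: max_gap_def)
  then show "closed {q. max_gap F q \<le> d}"
    by (auto intro!: closed_Collect_le continuous_on_monotone_gap continuous_on_const)
qed

lemma monotone_gap_descent:
  assumes "w \<noteq> 0" "(norm w)\<^sup>2 \<le> inner w (2 *\<^sub>R q + snd k - fst k)"
  shows "\<forall>\<^sub>F t in at_right 0. monotone_gap k (q - t *\<^sub>R w) < monotone_gap k q"
proof -
  have "monotone_gap k (q - t *\<^sub>R w) < monotone_gap k q" if "0 < t" "t < 1" for t :: real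
  proof -
    have "monotone_gap k (q - t *\<^sub>R w)
        = monotone_gap k q - t * inner w (2 *\<^sub>R q + snd k - fst k) + t\<^sup>2 * (norm w)\<^sup>2"
      using monotone_gap_add[of k q "- t *\<^sub>R w"] by (simp add: power_mult_distrib)
    moreover have "t\<^sup>2 * (norm w)\<^sup>2 < t * (norm w)\<^sup>2"
      using that assms(1) by (simp add: power2_eq_square)
    ultimately show ?thesis using mult_left_mono[OF assms(2), of t] that by linarith
  qed
  then show ?thesis by (auto simp: eventually_at_right_field intro: exI[of _ 1])
qed

lemma max_gap_minimizer_active_hull:
  fixes F :: "('a::real_inner \<times> 'a) set"
  assumes fin: "finite F" and ne: "F \<noteq> {}" and min: "\<And>q. max_gap F q0 \<le> max_gap F q"
  defines "K \<equiv> {k\<in>F. monotone_gap k q0 = max_gap F q0}"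
  shows "0 \<in> convex hull ((\<lambda>k. 2 *\<^sub>R q0 + snd k - fst k) ` K)"
proof (rule ccontr)
  assume not0: "0 \<notin> convex hull ((\<lambda>k. 2 *\<^sub>R q0 + snd k - fst k) ` K)"
  (* then the point w of least norm in the hull is a common descent direction of the active gaps *)
  define g where "g k = 2 *\<^sub>R q0 + snd k - fst k" for k
  define C where "C = convex hull (g ` K)"
  have "finite K" "K \<noteq> {}" using fin max_gap_attained[OF fin ne, of q0] by (force simp: K_def)+
  then have "compact C" "C \<noteq> {}" by (auto simp: C_def finite_imp_compact_convex_hull)
  then obtain w where w: "w \<in> C" "\<forall>y\<in>C. dist 0 w \<le> dist 0 y"
    using continuous_attains_inf[of C norm] continuous_on_norm_id by auto
  have "w \<noteq> 0" using w(1) not0 by (auto simp: C_def g_def)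
  have w_g: "(norm w)\<^sup>2 \<le> inner w (g k)" if "k \<in> K" for k
  proof -
    have "inner (0 - w) (g k - w) \<le> 0"
      using any_closest_point_dot[of C w "g k" 0] w that \<open>compact C\<close>
      by (auto simp: C_def compact_imp_closed hull_inc)
    then show ?thesis by (simp add: inner_diff_right power2_norm_eq_inner)
  qed
  have "\<forall>\<^sub>F t in at_right 0. monotone_gap k (q0 - t *\<^sub>R w) < max_gap F q0" if "k \<in> F" for k
  proof (cases "k \<in> K")
    case True
    then show ?thesis
      using monotone_gap_descent[OF \<open>w \<noteq> 0\<close> w_g[OF True, unfolded g_def]] by (simp add: K_def)
  next
    case False
    then have "monotone_gap k q0 < max_gap F q0"
      using monotone_gap_le_max_gap[OF fin that, of q0] that by (auto simp: K_def)
    moreover have "((\<lambda>t. monotone_gap k (q0 - t *\<^sub>R w)) \<longlongrightarrow> monotone_gap k (q0 - 0 *\<^sub>R w)) (at_right 0)"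
      by (intro continuous_on_tendsto_compose[OF continuous_on_monotone_gap[of UNIV]] tendsto_intros) auto
    ultimately show ?thesis by (simp add: order_tendstoD)
  qed
  then have "\<forall>\<^sub>F t in at_right 0. \<forall>k\<in>F. monotone_gap k (q0 - t *\<^sub>R w) < max_gap F q0"
    by (rule eventually_ball_finite[OF fin, rule_format])
  then obtain t :: real where "\<forall>k\<in>F. monotone_gap k (q0 - t *\<^sub>R w) < max_gap F q0"
    using eventually_happens'[OF trivial_limit_at_right_real] by blast
  then have "max_gap F (q0 - t *\<^sub>R w) < max_gap F q0" using max_gap_attained[OF fin ne] by metis
  then show False using min by (simp add: not_le[symmetric])
qed

lemma convex_comb_monotone_gap_eq:
  assumes "sum l K = 1" "(\<Sum>k\<in>K. l k *\<^sub>R (2 *\<^sub>R q0 + snd k - fst k)) = 0"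
  shows "(\<Sum>k\<in>K. l k * monotone_gap k q) = (\<Sum>k\<in>K. l k * monotone_gap k q0) + (norm (q - q0))\<^sup>2"
proof -
  have "monotone_gap k q
      = monotone_gap k q0 + inner (q - q0) (2 *\<^sub>R q0 + snd k - fst k) + (norm (q - q0))\<^sup>2" for k
    using monotone_gap_add[of k q0 "q - q0"] by simp
  then have "(\<Sum>k\<in>K. l k * monotone_gap k q) = (\<Sum>k\<in>K. l k * monotone_gap k q0
      + inner (q - q0) (l k *\<^sub>R (2 *\<^sub>R q0 + snd k - fst k)) + l k * (norm (q - q0))\<^sup>2)"
    by (simp only: inner_scaleR_right distrib_left)
  also have "\<dots> = (\<Sum>k\<in>K. l k * monotone_gap k q0)
      + inner (q - q0) (\<Sum>k\<in>K. l k *\<^sub>R (2 *\<^sub>R q0 + snd k - fst k)) + sum l K * (norm (q - q0))\<^sup>2"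
    by (simp add: sum.distrib inner_sum_right sum_distrib_right)
  also have "\<dots> = (\<Sum>k\<in>K. l k * monotone_gap k q0) + (norm (q - q0))\<^sup>2"
    using assms by simp
  finally show ?thesis .
qed

lemma convex_comb_monotone_gap_nonpos:
  assumes mono: "monotone_set M" and K: "K \<subseteq> M" "finite K"
    and l: "\<forall>k\<in>K. 0 \<le> l k" "sum l K = 1"
  shows "(\<Sum>k\<in>K. l k * monotone_gap k (- (\<Sum>j\<in>K. l j *\<^sub>R snd j))) \<le> 0"
proof -
  define xb where "xb = (\<Sum>k\<in>K. l k *\<^sub>R fst k)"
  define vb where "vb = (\<Sum>k\<in>K. l k *\<^sub>R snd k)"
  define c where "c = (\<Sum>k\<in>K. l k * inner (fst k) (snd k))"
  have xb_inner: "inner xb w = (\<Sum>k\<in>K. l k * inner (fst k) w)" for w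
    by (simp add: xb_def inner_sum_left)
  have vb_inner: "inner w vb = (\<Sum>k\<in>K. l k * inner w (snd k))" for w
    by (simp add: vb_def inner_sum_right)
  (* at -vb the weighted gap is inner xb vb - c, minus half the double sum given by monotonicity *)
  have "monotone_gap k (- vb) = inner vb vb - inner vb (snd k) + inner (fst k) vb - inner (fst k) (snd k)" for k
    by (simp add: monotone_gap_def algebra_simps inner_commute)
  then have "(\<Sum>k\<in>K. l k * monotone_gap k (- vb)) = inner xb vb - c"
    using l(2) by (simp add: c_def right_diff_distrib distrib_left sum_subtractf sum.distrib
        flip: xb_inner vb_inner sum_distrib_right)
  moreover have "(\<Sum>j\<in>K. l j * inner (fst k - fst j) (snd k - snd j))
      = inner (fst k) (snd k) - inner (fst k) vb - inner xb (snd k) + c" for k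
    using l(2) by (simp add: xb_inner vb_inner c_def inner_diff_left inner_diff_right right_diff_distrib
        sum_subtractf sum.distrib sum_distrib_right[symmetric])
  then have "(\<Sum>k\<in>K. l k * (\<Sum>j\<in>K. l j * inner (fst k - fst j) (snd k - snd j))) = 2 * c - 2 * inner xb vb"
    using l(2) by (simp add: right_diff_distrib distrib_left sum_subtractf sum.distrib
        flip: xb_inner vb_inner c_def sum_distrib_right)
  moreover have "0 \<le> (\<Sum>k\<in>K. l k * (\<Sum>j\<in>K. l j * inner (fst k - fst j) (snd k - snd j)))"
    using mono K l(1) unfolding monotone_set_def by (intro sum_nonneg mult_nonneg_nonneg) auto
  ultimately show ?thesis by (simp add: vb_def)
qed

(* For finite F, q is the minimizer of max_gap F and m its value; the quadratic margin is what
   keeps the certificates of nested sets close to each other. *)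
definition gap_certificate :: "('a::real_inner \<times> 'a) set \<Rightarrow> 'a \<Rightarrow> real \<Rightarrow> bool" where
  "gap_certificate F q m \<longleftrightarrow> m \<le> 0 \<and> (\<forall>k\<in>F. monotone_gap k q \<le> m)
     \<and> (\<forall>p. \<exists>k\<in>F. m + (norm (p - q))\<^sup>2 \<le> monotone_gap k p)"

lemma finite_gap_certificate:
  fixes F :: "('a::{real_inner,complete_space} \<times> 'a) set"
  assumes fin: "finite F" and ne: "F \<noteq> {}" and mono: "monotone_set F"
  shows "\<exists>q m. gap_certificate F q m"
proof -
  obtain q0 where q0: "\<And>q. max_gap F q0 \<le> max_gap F q" using max_gap_attains_min[OF fin ne] by blast
  define m where "m = max_gap F q0"
  define K where "K = {k\<in>F. monotone_gap k q0 = m}"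
  have K: "finite K" "K \<subseteq> F" using fin by (auto simp: K_def)
  obtain k0 where "k0 \<in> F" "max_gap F q0 = monotone_gap k0 q0" using max_gap_attained[OF fin ne] by blast
  then have "k0 \<in> K" by (simp add: K_def m_def)
  then have "K \<noteq> {}" by blast
  have "0 \<in> convex hull ((\<lambda>k. 2 *\<^sub>R q0 + snd k - fst k) ` K)"
    using max_gap_minimizer_active_hull[OF fin ne q0] by (simp add: K_def m_def)
  then obtain l where l: "\<forall>k\<in>K. 0 \<le> l k" "sum l K = 1" "(\<Sum>k\<in>K. l k *\<^sub>R (2 *\<^sub>R q0 + snd k - fst k)) = 0"
    using convex_hull_image_finite_weights[OF K(1)] by blast
  define S where "S p = (\<Sum>k\<in>K. l k * monotone_gap k p)" for p
  have "S q0 = (\<Sum>k\<in>K. l k * m)" unfolding S_def by (rule sum.cong) (auto simp: K_def)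
  then have "S q0 = m" using l(2) by (simp add: sum_distrib_right[symmetric])
  then have S: "S p = m + (norm (p - q0))\<^sup>2" for p
    using convex_comb_monotone_gap_eq[OF l(2,3), of p] by (simp add: S_def)
  have "m \<le> 0"
    using S[of "- (\<Sum>j\<in>K. l j *\<^sub>R snd j)"] convex_comb_monotone_gap_nonpos[OF mono K(2,1) l(1,2)]
    unfolding S_def by (smt (verit) zero_le_power2)
  moreover have "\<exists>k\<in>F. m + (norm (p - q0))\<^sup>2 \<le> monotone_gap k p" for p
  proof -
    obtain k where "k \<in> K" "S p \<le> monotone_gap k p"
      using ex_ge_convex_comb[OF K(1) \<open>K \<noteq> {}\<close> l(1,2), of "\<lambda>k. monotone_gap k p"] unfolding S_def by blast
    then show ?thesis using K(2) S[of p] by auto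
  qed
  moreover have "\<forall>k\<in>F. monotone_gap k q0 \<le> m" using monotone_gap_le_max_gap[OF fin] by (simp add: m_def)
  ultimately show ?thesis unfolding gap_certificate_def by blast
qed

lemma gap_certificate_mono:
  assumes "gap_certificate F q m" "gap_certificate G q' m'" "F \<subseteq> G"
  shows "m + (norm (q' - q))\<^sup>2 \<le> m'"
proof -
  obtain k where "k \<in> F" "m + (norm (q' - q))\<^sup>2 \<le> monotone_gap k q'"
    using assms(1) unfolding gap_certificate_def by blast
  moreover have "monotone_gap k q' \<le> m'" using assms(2,3) \<open>k \<in> F\<close> unfolding gap_certificate_def by blast
  ultimately show ?thesis by linarith
qed

lemma monotone_set_certificate_chain:
  fixes M :: "('a::{real_inner,complete_space} \<times> 'a) set"
  assumes mono: "monotone_set M" and ne: "M \<noteq> {}"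
  obtains G :: "nat \<Rightarrow> ('a \<times> 'a) set" and qs :: "nat \<Rightarrow> 'a" and ms :: "nat \<Rightarrow> real"
  where "\<And>n. finite (G n)" "\<And>n. G n \<subseteq> M" "incseq G" "\<And>n. gap_certificate (G n) (qs n) (ms n)"
    and "\<And>n H q m. G n \<subseteq> H \<Longrightarrow> finite H \<Longrightarrow> H \<subseteq> M \<Longrightarrow> gap_certificate H q m
           \<Longrightarrow> (norm (q - qs n))\<^sup>2 \<le> 1 / Suc n"
proof -
  have cert: "\<exists>q m. gap_certificate F q m" if "finite F" "F \<noteq> {}" "F \<subseteq> M" for F
    using finite_gap_certificate[OF that(1,2) monotone_set_subset[OF mono that(3)]] .
  define V where "V = {m. \<exists>F q. finite F \<and> F \<noteq> {} \<and> F \<subseteq> M \<and> gap_certificate F q m}"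
  obtain k0 where "k0 \<in> M" using ne by blast
  then have "V \<noteq> {}" using cert[of "{k0}"] unfolding V_def by blast
  have "bdd_above V" unfolding V_def gap_certificate_def by (auto intro: bdd_aboveI[where M = 0])
  have "\<forall>n. \<exists>F. finite F \<and> F \<noteq> {} \<and> F \<subseteq> M \<and> (\<exists>q m. gap_certificate F q m \<and> Sup V - 1 / Suc n < m)"
  proof
    fix n
    have "Sup V - 1 / Suc n < Sup V" by simp
    then obtain m where "m \<in> V" "Sup V - 1 / Suc n < m"
      using less_cSup_iff[OF \<open>V \<noteq> {}\<close> \<open>bdd_above V\<close>] by blast
    then show "\<exists>F. finite F \<and> F \<noteq> {} \<and> F \<subseteq> M \<and> (\<exists>q m. gap_certificate F q m \<and> Sup V - 1 / Suc n < m)"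
      unfolding V_def by blast
  qed
  from choice[OF this] obtain F where F: "\<And>n. finite (F n) \<and> F n \<noteq> {} \<and> F n \<subseteq> M"
    and F_val: "\<And>n. \<exists>q m. gap_certificate (F n) q m \<and> Sup V - 1 / Suc n < m"
    by blast
  define G where "G n = (\<Union>i\<le>n. F i)" for n
  have G: "finite (G n)" "G n \<noteq> {}" "G n \<subseteq> M" for n using F by (auto simp: G_def)
  have "\<forall>n. \<exists>q m. gap_certificate (G n) q m" using cert[OF G] by blast
  then obtain qs ms where qs: "\<And>n. gap_certificate (G n) (qs n) (ms n)"
    by metis
  (* a certificate of a superset of G n has value at most Sup V, that of G n is above Sup V - 1 / Suc n *)
  have close: "(norm (q - qs n))\<^sup>2 \<le> 1 / Suc n"
    if "G n \<subseteq> H" "finite H" "H \<subseteq> M" "gap_certificate H q m" for n H q m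
  proof -
    obtain q' m' where "gap_certificate (F n) q' m'" "Sup V - 1 / Suc n < m'" using F_val by blast
    moreover have "F n \<subseteq> G n" by (auto simp: G_def)
    ultimately have "m' + (norm (qs n - q'))\<^sup>2 \<le> ms n" by (intro gap_certificate_mono[OF _ qs])
    then have "Sup V - 1 / Suc n < ms n"
      using \<open>Sup V - 1 / Suc n < m'\<close> zero_le_power2[of "norm (qs n - q')"] by linarith
    moreover have "H \<noteq> {}" using that(1) G(2)[of n] by blast
    then have "m \<in> V" using that(2-4) unfolding V_def by blast
    then have "m \<le> Sup V" using \<open>bdd_above V\<close> by (rule cSup_upper)
    ultimately show ?thesis using gap_certificate_mono[OF qs that(4,1)] by linarith
  qed
  have "incseq G" unfolding incseq_def G_def by (force intro: le_trans)
  show thesis by (rule that[of G qs ms]) (fact G(1,3) qs close \<open>incseq G\<close>)+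
qed

lemma monotone_set_ex_gap_nonpos:
  fixes M :: "('a::{real_inner,complete_space} \<times> 'a) set"
  assumes mono: "monotone_set M"
  shows "\<exists>q. \<forall>k\<in>M. monotone_gap k q \<le> 0"
proof (cases "M = {}")
  case False
  obtain G qs ms where G: "\<And>n. finite (G n)" "\<And>n. G n \<subseteq> M" "incseq G"
    and qs: "\<And>n. gap_certificate (G n) (qs n) (ms n)"
    and close: "\<And>n H q m. G n \<subseteq> H \<Longrightarrow> finite H \<Longrightarrow> H \<subseteq> M \<Longrightarrow> gap_certificate H q m
                  \<Longrightarrow> (norm (q - qs n))\<^sup>2 \<le> 1 / Suc n"
    using monotone_set_certificate_chain[OF mono False] by blast
  define \<delta> where "\<delta> n = sqrt (1 / real (Suc n))" for n
  have \<delta>: "\<delta> \<longlonglongrightarrow> 0"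
    unfolding \<delta>_def using tendsto_real_sqrt[OF LIMSEQ_Suc[OF lim_1_over_n]] by simp
  have dist_qs: "dist q (qs n) \<le> \<delta> n"
    if "G n \<subseteq> H" "finite H" "H \<subseteq> M" "gap_certificate H q m" for n H q m
    using close[OF that] unfolding \<delta>_def dist_norm by (simp add: real_le_rsqrt)
  have "dist (qs i) (qs j) \<le> 2 * \<delta> N" if "N \<le> i" "N \<le> j" for N i j
  proof -
    have "dist (qs i) (qs N) \<le> \<delta> N" "dist (qs j) (qs N) \<le> \<delta> N"
      using dist_qs[OF monoD[OF G(3) that(1)] G(1,2) qs] dist_qs[OF monoD[OF G(3) that(2)] G(1,2) qs]
      by auto
    then show ?thesis using dist_triangle2[of "qs i" "qs j" "qs N"] by linarith
  qed
  with tendsto_mult_right_zero[OF \<delta>] have "Cauchy qs" by (rule Cauchy_if_dist_le_vanishing)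
  then obtain q where q: "qs \<longlonglongrightarrow> q" using Cauchy_convergent convergent_def by blast
  have "monotone_gap k q \<le> 0" if "k \<in> M" for k
  proof -
    have "\<forall>n. \<exists>q' m'. gap_certificate (insert k (G n)) q' m'"
      using finite_gap_certificate[OF finite.insertI[OF G(1)] _ monotone_set_subset[OF mono]]
        insert_subsetI[OF that G(2)] by blast
    then obtain q' m' where q': "\<And>n. gap_certificate (insert k (G n)) (q' n) (m' n)" by metis
    have "dist (q' n) (qs n) \<le> \<delta> n" for n
      using dist_qs[OF subset_insertI finite.insertI[OF G(1)] insert_subsetI[OF that G(2)] q'] .
    then have "(\<lambda>n. q' n - qs n) \<longlonglongrightarrow> 0"
      by (intro Lim_null_comparison[OF _ \<delta>]) (simp add: dist_norm)
    from tendsto_add[OF this q] have "q' \<longlonglongrightarrow> q" by simp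
    moreover have "q' n \<in> {p. monotone_gap k p \<le> 0}" for n
      using q'[of n] unfolding gap_certificate_def by fastforce
    moreover have "closed {p. monotone_gap k p \<le> 0}"
      by (intro closed_Collect_le continuous_on_monotone_gap continuous_on_const)
    ultimately show ?thesis
      using Lim_in_closed_set[of "{p. monotone_gap k p \<le> 0}" q' sequentially q] by simp
  qed
  then show ?thesis by blast
qed simp

lemma monotone_opD: "monotone_op A \<Longrightarrow> u \<in> A x \<Longrightarrow> v \<in> A y \<Longrightarrow> 0 \<le> inner (x - y) (u - v)"
  unfolding monotone_op_def by blast

lemma strongly_monotone_opD:
  "strongly_monotone_op \<mu> A \<Longrightarrow> u \<in> A x \<Longrightarrow> v \<in> A y \<Longrightarrow> \<mu> * (norm (x - y))\<^sup>2 \<le> inner (x - y) (u - v)"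
  unfolding strongly_monotone_op_def by blast

lemma maximally_monotone_op_memI:
  assumes "maximally_monotone_op A" and "\<And>x u. u \<in> A x \<Longrightarrow> 0 \<le> inner (q - x) (w - u)"
  shows "w \<in> A q"
proof -
  define B where "B x = A x \<union> (if x = q then {w} else {})" for x
  have mono: "0 \<le> inner (x - y) (u - v)" if "u \<in> A x" "v \<in> A y" for x y u v
    using monotone_opD assms(1) that unfolding maximally_monotone_op_def by blast
  have swap: "inner (x - q) (u - w) = inner (q - x) (w - u)" for x u
    by (simp add: inner_diff_left inner_diff_right inner_commute)
  have "monotone_op B"
    unfolding monotone_op_def B_def using mono assms(2) swap by (auto split: if_splits)
  moreover have "gra A \<subseteq> gra B" by (auto simp: gra_def B_def)
  ultimately have "gra B = gra A" using assms(1) unfolding maximally_monotone_op_def by blast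
  moreover have "(q, w) \<in> gra B" by (simp add: gra_def B_def)
  ultimately show ?thesis by (simp add: gra_def)
qed

theorem minty_surjectivity:
  fixes A :: "'a::{real_inner,complete_space} \<Rightarrow> 'a set"
  assumes max: "maximally_monotone_op A" and "0 < \<gamma>"
  shows "\<exists>z. \<exists>u\<in>A z. p = z + \<gamma> *\<^sub>R u"
proof -
  define M where "M = (\<lambda>(x, u). (x, \<gamma> *\<^sub>R u - p)) ` gra A"
  have "monotone_set M"
    using max \<open>0 < \<gamma>\<close> unfolding M_def monotone_set_def maximally_monotone_op_def monotone_op_def gra_def
    by (auto simp: inner_diff_right)
  then obtain q where q: "\<forall>k\<in>M. monotone_gap k q \<le> 0" using monotone_set_ex_gap_nonpos by blast
  define w where "w = (1 / \<gamma>) *\<^sub>R (p - q)"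
  have "0 \<le> inner (q - x) (w - u)" if "u \<in> A x" for x u
  proof -
    have "inner (q - x) (q + \<gamma> *\<^sub>R u - p) \<le> 0"
      using q that by (force simp: M_def gra_def monotone_gap_def algebra_simps)
    moreover have "inner (q - x) (w - u) = - (1 / \<gamma>) * inner (q - x) (q + \<gamma> *\<^sub>R u - p)"
      using \<open>0 < \<gamma>\<close> by (simp add: w_def algebra_simps)
    ultimately show ?thesis using \<open>0 < \<gamma>\<close> by (simp add: divide_nonpos_pos)
  qed
  then have "w \<in> A q" by (rule maximally_monotone_op_memI[OF max])
  moreover have "p = q + \<gamma> *\<^sub>R w" using \<open>0 < \<gamma>\<close> by (simp add: w_def)
  ultimately show ?thesis by blast
qed

section \<open>Resolvents\<close>

lemma resolvent_eqI:
  assumes "monotone_op A" "0 < \<gamma>" "u \<in> A z" "p = z + \<gamma> *\<^sub>R u"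
  shows "resolvent \<gamma> A p = z"
  unfolding resolvent_def
proof (rule the_equality)
  show "\<exists>u\<in>A z. p = z + \<gamma> *\<^sub>R u" using assms(3,4) by blast
next
  fix z' assume "\<exists>u'\<in>A z'. p = z' + \<gamma> *\<^sub>R u'"
  then obtain u' where u': "u' \<in> A z'" "p = z' + \<gamma> *\<^sub>R u'" by blast
  have "z - z' = \<gamma> *\<^sub>R (u' - u)" using assms(4) u'(2) by (simp add: algebra_simps)
  have "0 \<le> \<gamma> * inner (z' - z) (u' - u)"
    using monotone_opD[OF assms(1) u'(1) assms(3)] assms(2) by simp
  also have "\<dots> = inner (z' - z) (z - z')" using \<open>z - z' = \<gamma> *\<^sub>R (u' - u)\<close> by simp
  also have "\<dots> = - (norm (z' - z))\<^sup>2"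
    by (simp add: power2_norm_eq_inner flip: inner_minus_right)
  finally show "z' = z" by simp
qed

lemma resolvent_residual_mem:
  fixes A :: "'a::{real_inner,complete_space} \<Rightarrow> 'a set"
  assumes "maximally_monotone_op A" "0 < \<gamma>"
  shows "(1 / \<gamma>) *\<^sub>R (p - resolvent \<gamma> A p) \<in> A (resolvent \<gamma> A p)"
proof -
  obtain z u where "u \<in> A z" "p = z + \<gamma> *\<^sub>R u" using minty_surjectivity[OF assms] by blast
  moreover from this have "resolvent \<gamma> A p = z"
    using assms resolvent_eqI unfolding maximally_monotone_op_def by blast
  ultimately show ?thesis using assms(2) by simp
qed

lemma maximally_monotone_op_continuous:
  assumes "monotone_op (\<lambda>x. {f x})" "continuous_on UNIV f"
  shows "maximally_monotone_op (\<lambda>x. {f x})"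
  unfolding maximally_monotone_op_def
proof (intro conjI allI impI)
  fix B assume B: "monotone_op B \<and> gra (\<lambda>x. {f x}) \<subseteq> gra B"
  have fB: "f x \<in> B x" for x using B by (auto simp: gra_def)
  have "w = f z" if w: "w \<in> B z" for z w
  proof -
    define d where "d = w - f z"
    have "0 \<le> inner d (f (z + t *\<^sub>R d) - w)" if "0 < t" for t
    proof -
      have "0 \<le> inner ((z + t *\<^sub>R d) - z) (f (z + t *\<^sub>R d) - w)"
        using monotone_opD[of B, OF _ fB w] B by blast
      then show ?thesis using that by (simp add: zero_le_mult_iff)
    qed
    moreover have "((\<lambda>t. inner d (f (z + t *\<^sub>R d) - w)) \<longlongrightarrow> inner d (f (z + 0 *\<^sub>R d) - w)) (at_right 0)"
      by (intro tendsto_intros continuous_on_tendsto_compose[OF assms(2)]) auto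
    moreover have "\<forall>\<^sub>F t in at_right 0. 0 \<le> inner d (f (z + t *\<^sub>R d) - w)"
      using eventually_at_right_less[of 0] by eventually_elim (use calculation in auto)
    ultimately have "0 \<le> inner d (f z - w)" by (intro tendsto_lowerbound) auto
    also have "inner d (f z - w) = - (norm d)\<^sup>2" by (simp add: d_def power2_norm_eq_inner algebra_simps)
    finally show ?thesis by (simp add: d_def)
  qed
  then show "gra B = gra (\<lambda>x. {f x})" using B by (auto simp: gra_def)
qed (fact assms(1))

section \<open>The Malitsky--Tam relations\<close>

(* With z = mt_z (Suc n) \<gamma> A x and u i \<in> A i (z i), these say that the argument of the i-th
   resolvent step is z i + \<gamma> u i. *)
definition malitsky_tam_equations ::
    "nat \<Rightarrow> real \<Rightarrow> (nat \<Rightarrow> 'a::real_vector) \<Rightarrow> (nat \<Rightarrow> 'a) \<Rightarrow> (nat \<Rightarrow> 'a) \<Rightarrow> bool" where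
  "malitsky_tam_equations n \<gamma> x z u \<longleftrightarrow>
     x 1 = z 1 + \<gamma> *\<^sub>R u 1 \<and>
     (\<forall>i\<in>{2..n}. z (i - 1) + x i - x (i - 1) = z i + \<gamma> *\<^sub>R u i) \<and>
     z 1 + z n - x n = z (Suc n) + \<gamma> *\<^sub>R u (Suc n)"

lemma malitsky_tam_equations_diff:
  assumes "malitsky_tam_equations n \<gamma> x z u" "malitsky_tam_equations n \<gamma> x' z' u'"
  shows "malitsky_tam_equations n \<gamma> (\<lambda>i. x i - x' i) (\<lambda>i. z i - z' i) (\<lambda>i. u i - u' i)"
  using assms unfolding malitsky_tam_equations_def by (simp add: algebra_simps)

lemma malitsky_tam_equations_partial_sums:
  assumes "malitsky_tam_equations n \<gamma> x z u"
  shows "\<And>i. i \<in> {1..n} \<Longrightarrow> x i - z i = \<gamma> *\<^sub>R (\<Sum>j=1..i. u j)"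
    and "1 \<le> n \<Longrightarrow> z 1 - z (Suc n) = \<gamma> *\<^sub>R (\<Sum>j=1..Suc n. u j)"
proof -
  have step: "x i - z i = \<gamma> *\<^sub>R (\<Sum>j=1..i. u j)" if "i \<in> {1..n}" for i
    using that
  proof (induction i)
    case (Suc i)
    show ?case
    proof (cases "i = 0")
      case False
      then have "Suc i \<in> {2..n}" using Suc.prems by auto
      then have "z i + x (Suc i) - x i = z (Suc i) + \<gamma> *\<^sub>R u (Suc i)"
        using assms unfolding malitsky_tam_equations_def by fastforce
      then show ?thesis using Suc False by (simp add: algebra_simps)
    qed (use assms in \<open>simp add: malitsky_tam_equations_def\<close>)
  qed simp
  then show "\<And>i. i \<in> {1..n} \<Longrightarrow> x i - z i = \<gamma> *\<^sub>R (\<Sum>j=1..i. u j)" .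
  assume "1 \<le> n"
  then show "z 1 - z (Suc n) = \<gamma> *\<^sub>R (\<Sum>j=1..Suc n. u j)"
    using assms step[of n] unfolding malitsky_tam_equations_def by (simp add: algebra_simps)
qed

lemma sum_inner_by_parts:
  fixes w z :: "nat \<Rightarrow> 'a::real_inner"
  shows "(\<Sum>i=1..n. inner (w i) (z (Suc i) - z i))
       = inner (w n) (z (Suc n)) - inner (w 0) (z 1) - (\<Sum>i=1..n. inner (w i - w (i - 1)) (z i))"
  by (induction n) (simp_all add: inner_diff_left inner_diff_right)

lemma malitsky_tam_norm_identity:
  fixes x z u :: "nat \<Rightarrow> 'a::real_inner"
  assumes eqs: "malitsky_tam_equations n \<gamma> x z u" and "1 \<le> n"
  shows "(\<Sum>i=1..n. (norm (x i + \<theta> *\<^sub>R (z (Suc i) - z i)))\<^sup>2)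
       = (\<Sum>i=1..n. (norm (x i))\<^sup>2) - \<theta> * (1 - \<theta>) * (\<Sum>i=1..n. (norm (z (Suc i) - z i))\<^sup>2)
         - \<theta> * (norm (z 1 - z (Suc n)))\<^sup>2 - 2 * \<theta> * \<gamma> * (\<Sum>i=1..Suc n. inner (z i) (u i))"
proof -
  define w where "w i = \<gamma> *\<^sub>R (\<Sum>j=1..i. u j)" for i
  (* w i = x i - z i for i \<le> n and w (Suc n) = z 1 - z (Suc n); summing by parts against the
     increments of z turns the cross terms into the products inner (z i) (u i) *)
  have x: "x i = z i + w i" if "i \<in> {1..n}" for i
    using malitsky_tam_equations_partial_sums(1)[OF eqs that] by (simp add: w_def algebra_simps)
  have w_last: "w (Suc n) = z 1 - z (Suc n)"
    using malitsky_tam_equations_partial_sums(2)[OF eqs \<open>1 \<le> n\<close>] by (simp add: w_def)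
  have w_diff: "w i - w (i - 1) = \<gamma> *\<^sub>R u i" if "1 \<le> i" for i
    using that by (cases i) (simp_all add: w_def scaleR_add_right)
  have square_expand: "(norm (x i + \<theta> *\<^sub>R (z (Suc i) - z i)))\<^sup>2
      = (norm (x i))\<^sup>2 - \<theta> * (1 - \<theta>) * (norm (z (Suc i) - z i))\<^sup>2
      + \<theta> * ((norm (z (Suc i)))\<^sup>2 - (norm (z i))\<^sup>2 + 2 * inner (w i) (z (Suc i) - z i))"
    if "i \<in> {1..n}" for i
    unfolding x[OF that] power2_norm_eq_inner by (simp add: inner_commute algebra_simps)
  have "(\<Sum>i=1..n. (norm (x i + \<theta> *\<^sub>R (z (Suc i) - z i)))\<^sup>2)
      = (\<Sum>i=1..n. (norm (x i))\<^sup>2 - \<theta> * (1 - \<theta>) * (norm (z (Suc i) - z i))\<^sup>2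
      + \<theta> * ((norm (z (Suc i)))\<^sup>2 - (norm (z i))\<^sup>2 + 2 * inner (w i) (z (Suc i) - z i)))"
    by (rule sum.cong) (simp_all add: square_expand)
  also have "\<dots> = (\<Sum>i=1..n. (norm (x i))\<^sup>2) - \<theta> * (1 - \<theta>) * (\<Sum>i=1..n. (norm (z (Suc i) - z i))\<^sup>2)
        + \<theta> * ((\<Sum>i=1..n. (norm (z (Suc i)))\<^sup>2 - (norm (z i))\<^sup>2) + 2 * (\<Sum>i=1..n. inner (w i) (z (Suc i) - z i)))"
    by (simp add: sum.distrib sum_subtractf sum_distrib_left distrib_left right_diff_distrib)
  also have "(\<Sum>i=1..n. (norm (z (Suc i)))\<^sup>2 - (norm (z i))\<^sup>2) = (norm (z (Suc n)))\<^sup>2 - (norm (z 1))\<^sup>2"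
    using sum_Suc_diff[of 1 n "\<lambda>i. (norm (z i))\<^sup>2"] \<open>1 \<le> n\<close> by simp
  also have "(\<Sum>i=1..n. inner (w i) (z (Suc i) - z i))
      = inner (w n) (z (Suc n)) - inner (w 0) (z 1) - (\<Sum>i=1..n. inner (w i - w (i - 1)) (z i))"
    by (rule sum_inner_by_parts)
  also have "(\<Sum>i=1..n. inner (w i - w (i - 1)) (z i)) = \<gamma> * (\<Sum>i=1..n. inner (z i) (u i))"
    unfolding sum_distrib_left by (rule sum.cong) (auto simp: w_diff[unfolded One_nat_def] inner_commute)
  also have "w n = w (Suc n) - \<gamma> *\<^sub>R u (Suc n)" using w_diff[of "Suc n"] by (simp add: algebra_simps)
  finally show ?thesis
    unfolding w_last power2_norm_eq_inner w_def[of 0]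
    by (simp add: inner_commute algebra_simps)
qed

lemma malitsky_tam_sum_norm_le:
  fixes x z u :: "nat \<Rightarrow> 'a::real_inner"
  assumes eqs: "malitsky_tam_equations n \<gamma> x z u"
    and lip: "\<And>i. i \<in> {1..n} \<Longrightarrow> norm (u i) \<le> L * norm (z i)" and "0 \<le> \<gamma>" "0 \<le> L"
  shows "(\<Sum>i=1..n. (norm (x i))\<^sup>2) \<le> (real n)\<^sup>2 * (1 + \<gamma> * L)\<^sup>2 * (\<Sum>i=1..n. (norm (z i))\<^sup>2)"
proof -
  define S where "S = (\<Sum>j=1..n. norm (z j))"
  have x_le: "norm (x i) \<le> (1 + \<gamma> * L) * S" if i: "i \<in> {1..n}" for i
  proof -
    have "x i = z i + \<gamma> *\<^sub>R (\<Sum>j=1..i. u j)"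
      using malitsky_tam_equations_partial_sums(1)[OF eqs i] by (simp add: algebra_simps)
    then have "norm (x i) \<le> norm (z i) + \<gamma> * norm (\<Sum>j=1..i. u j)"
      using norm_triangle_ineq[of "z i" "\<gamma> *\<^sub>R (\<Sum>j=1..i. u j)"] \<open>0 \<le> \<gamma>\<close> by simp
    moreover have "norm (\<Sum>j=1..i. u j) \<le> L * S"
    proof -
      have "norm (\<Sum>j=1..i. u j) \<le> (\<Sum>j=1..i. norm (u j))" by (rule norm_sum)
      also have "\<dots> \<le> (\<Sum>j=1..n. norm (u j))" using i by (intro sum_mono2) auto
      also have "\<dots> \<le> (\<Sum>j=1..n. L * norm (z j))" using lip by (intro sum_mono) auto
      finally show ?thesis by (simp add: S_def sum_distrib_left)
    qed
    moreover have "norm (z i) \<le> S" unfolding S_def using i by (intro member_le_sum) auto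
    ultimately have "norm (x i) \<le> S + \<gamma> * (L * S)"
      using mult_left_mono[of _ "L * S" \<gamma>] \<open>0 \<le> \<gamma>\<close> by fastforce
    then show ?thesis by (simp add: algebra_simps)
  qed
  have "(\<Sum>i=1..n. (norm (x i))\<^sup>2) \<le> (\<Sum>i=1..n. ((1 + \<gamma> * L) * S)\<^sup>2)"
    using x_le by (intro sum_mono power_mono) auto
  also have "\<dots> = real n * (1 + \<gamma> * L)\<^sup>2 * S\<^sup>2" by (simp add: power_mult_distrib)
  also have "\<dots> \<le> real n * (1 + \<gamma> * L)\<^sup>2 * (real n * (\<Sum>i=1..n. (norm (z i))\<^sup>2))"
    using sum_squared_le_sum_of_squares[of "\<lambda>j. norm (z j)" "{1..n}"]
    by (intro mult_left_mono) (auto simp: S_def mult.commute)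
  finally show ?thesis by (simp add: power2_eq_square algebra_simps)
qed

lemma sum_norm_sq_le_last_and_increments:
  fixes z :: "nat \<Rightarrow> 'a::real_normed_vector"
  shows "(\<Sum>i=1..n. (norm (z i))\<^sup>2)
    \<le> real n * (real n + 1) * ((norm (z (Suc n)))\<^sup>2 + (\<Sum>i=1..n. (norm (z (Suc i) - z i))\<^sup>2))"
proof -
  define a where "a k = (if k = 0 then norm (z (Suc n)) else norm (z (Suc k) - z k))" for k
  have sum_a: "(\<Sum>k=0..n. f (a k)) = f (norm (z (Suc n))) + (\<Sum>k=1..n. f (norm (z (Suc k) - z k)))"
    for f :: "real \<Rightarrow> real"
    by (simp add: sum.atLeast_Suc_atMost a_def)
  have z_le: "norm (z j) \<le> (\<Sum>k=0..n. a k)" if "j \<in> {1..n}" for j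
  proof -
    have "z j = z (Suc n) - (\<Sum>k=j..n. z (Suc k) - z k)" using sum_Suc_diff[of j n z] that by simp
    then have "norm (z j) \<le> norm (z (Suc n)) + (\<Sum>k=j..n. norm (z (Suc k) - z k))"
      by (metis norm_sum norm_triangle_ineq4 add_left_mono order_trans)
    also have "(\<Sum>k=j..n. norm (z (Suc k) - z k)) \<le> (\<Sum>k=1..n. norm (z (Suc k) - z k))"
      using that by (intro sum_mono2) auto
    finally show ?thesis using sum_a[of id] by simp
  qed
  have "(\<Sum>i=1..n. (norm (z i))\<^sup>2) \<le> (\<Sum>i=1..n. (\<Sum>k=0..n. a k)\<^sup>2)"
    using z_le by (intro sum_mono power_mono) auto
  also have "\<dots> = real n * (\<Sum>k=0..n. a k)\<^sup>2" by simp
  also have "\<dots> \<le> real n * ((\<Sum>k=0..n. (a k)\<^sup>2) * (real n + 1))"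
    using sum_squared_le_sum_of_squares[of a "{0..n}"] by (intro mult_left_mono) (auto simp: add.commute)
  finally show ?thesis using sum_a[of "\<lambda>t. t\<^sup>2"] by (simp add: algebra_simps)
qed

lemma contraction_factor_of_decrease:
  fixes R E S \<kappa> M :: real
  assumes "0 < \<kappa>" "0 \<le> S" "R \<le> E - \<kappa> * S" "E \<le> M * S"
  shows "R \<le> (1 - \<kappa> / max M \<kappa>) * E"
proof -
  have "E \<le> max M \<kappa> * S" using assms(2,4) by (smt (verit) mult_right_mono max.cobounded1)
  then have "\<kappa> / max M \<kappa> * E \<le> \<kappa> * S" using assms(1) by (simp add: field_simps)
  then show ?thesis using assms(3) by (simp add: algebra_simps)
qed

lemma malitsky_tam_dissipation_bound:
  fixes z u :: "nat \<Rightarrow> 'a::real_inner"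
  assumes "1 \<le> n" and params: "0 < \<theta>" "\<theta> < 1" "0 < a" "a \<le> \<gamma>" "0 < \<mu>"
    and mono: "\<And>i. i \<in> {1..Suc n} \<Longrightarrow> 0 \<le> inner (z i) (u i)"
    and strong: "\<mu> * (norm (z (Suc n)))\<^sup>2 \<le> inner (z (Suc n)) (u (Suc n))
                 \<or> (\<forall>i\<in>{1..n}. \<mu> * (norm (z i))\<^sup>2 \<le> inner (z i) (u i))"
  shows "\<theta> * min (1 - \<theta>) (2 * a * \<mu>) / (real n * (real n + 1)) * (\<Sum>i=1..n. (norm (z i))\<^sup>2)
    \<le> \<theta> * (1 - \<theta>) * (\<Sum>i=1..n. (norm (z (Suc i) - z i))\<^sup>2)
       + 2 * \<theta> * \<gamma> * (\<Sum>i=1..Suc n. inner (z i) (u i))"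
proof -
  define c where "c = \<theta> * min (1 - \<theta>) (2 * a * \<mu>)"
  define D where "D = (\<Sum>i=1..n. (norm (z (Suc i) - z i))\<^sup>2)"
  define S where "S = (\<Sum>i=1..n. (norm (z i))\<^sup>2)"
  define I where "I = (\<Sum>i=1..n. inner (z i) (u i))"
  define d where "d = real n * (real n + 1)"
  have "a * \<mu> \<le> \<gamma> * \<mu>" using \<open>a \<le> \<gamma>\<close> \<open>0 < \<mu>\<close> by (simp add: mult_right_mono)
  then have "min (1 - \<theta>) (2 * a * \<mu>) \<le> 2 * \<gamma> * \<mu>" by (simp add: min_le_iff_disj)
  then have "0 \<le> c" "c \<le> \<theta> * (1 - \<theta>)" "c \<le> 2 * \<theta> * \<gamma> * \<mu>"
    using params by (auto simp: c_def mult_left_mono dest: mult_left_mono[of _ _ \<theta>])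
  have "1 * 1 \<le> d" unfolding d_def using \<open>1 \<le> n\<close> by (intro mult_mono) auto
  have "0 \<le> D" "0 \<le> S" "0 \<le> I" using mono by (auto simp: D_def S_def I_def intro: sum_nonneg)
  have "c * S / d \<le> \<theta> * (1 - \<theta>) * D + 2 * \<theta> * \<gamma> * (I + inner (z (Suc n)) (u (Suc n)))"
  proof (cases "\<mu> * (norm (z (Suc n)))\<^sup>2 \<le> inner (z (Suc n)) (u (Suc n))")
    case True
    have "S \<le> d * ((norm (z (Suc n)))\<^sup>2 + D)"
      unfolding S_def D_def d_def by (rule sum_norm_sq_le_last_and_increments)
    then have "S / d \<le> (norm (z (Suc n)))\<^sup>2 + D" using \<open>1 * 1 \<le> d\<close> by (simp add: divide_le_eq mult.commute)
    then have "c * S / d \<le> c * (norm (z (Suc n)))\<^sup>2 + c * D"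
      using mult_left_mono[OF _ \<open>0 \<le> c\<close>] by (fastforce simp: distrib_left)
    also have "\<dots> \<le> 2 * \<theta> * \<gamma> * \<mu> * (norm (z (Suc n)))\<^sup>2 + \<theta> * (1 - \<theta>) * D"
      using \<open>c \<le> 2 * \<theta> * \<gamma> * \<mu>\<close> \<open>c \<le> \<theta> * (1 - \<theta>)\<close> \<open>0 \<le> D\<close>
      by (intro add_mono) (auto simp: mult_right_mono)
    moreover have "2 * \<theta> * \<gamma> * \<mu> * (norm (z (Suc n)))\<^sup>2 \<le> 2 * \<theta> * \<gamma> * inner (z (Suc n)) (u (Suc n))"
      using mult_left_mono[OF True, of "2 * \<theta> * \<gamma>"] params(1,3,4) by (simp add: mult.assoc)
    moreover have "0 \<le> 2 * \<theta> * \<gamma> * I" using \<open>0 \<le> I\<close> params(1,3,4) by simp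
    ultimately show ?thesis unfolding distrib_left by linarith
  next
    case False
    then have "\<mu> * S \<le> I" using strong unfolding S_def I_def sum_distrib_left by (auto intro: sum_mono)
    have "c * S * 1 \<le> c * S * d"
      using \<open>0 \<le> c\<close> \<open>0 \<le> S\<close> \<open>1 * 1 \<le> d\<close> by (intro mult_left_mono) auto
    then have "c * S / d \<le> c * S" using \<open>1 * 1 \<le> d\<close> by (simp add: divide_le_eq)
    also have "\<dots> \<le> 2 * \<theta> * \<gamma> * \<mu> * S" using \<open>c \<le> 2 * \<theta> * \<gamma> * \<mu>\<close> \<open>0 \<le> S\<close> by (rule mult_right_mono)
    also have "\<dots> \<le> 2 * \<theta> * \<gamma> * (I + inner (z (Suc n)) (u (Suc n)))"
    proof -
      have "0 \<le> 2 * \<theta> * \<gamma>" using params(1,3,4) by simp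
      then have "2 * \<theta> * \<gamma> * (\<mu> * S) \<le> 2 * \<theta> * \<gamma> * I"
        and "0 \<le> 2 * \<theta> * \<gamma> * inner (z (Suc n)) (u (Suc n))"
        using mult_left_mono[OF \<open>\<mu> * S \<le> I\<close>] mono[of "Suc n"] by auto
      then show ?thesis unfolding distrib_left mult.assoc[symmetric] by linarith
    qed
    moreover have "0 \<le> \<theta> * (1 - \<theta>) * D" using \<open>0 \<le> D\<close> params(1,2) by simp
    ultimately show ?thesis by linarith
  qed
  then show ?thesis by (simp add: c_def d_def S_def D_def I_def)
qed

lemma malitsky_tam_decrease:
  fixes x z u :: "nat \<Rightarrow> 'a::real_inner"
  assumes eqs: "malitsky_tam_equations n \<gamma> x z u" and "1 \<le> n"
    and params: "0 < \<theta>" "\<theta> < 1" "0 < a" "a \<le> \<gamma>" "0 < \<mu>"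
    and mono: "\<And>i. i \<in> {1..Suc n} \<Longrightarrow> 0 \<le> inner (z i) (u i)"
    and strong: "\<mu> * (norm (z (Suc n)))\<^sup>2 \<le> inner (z (Suc n)) (u (Suc n))
                 \<or> (\<forall>i\<in>{1..n}. \<mu> * (norm (z i))\<^sup>2 \<le> inner (z i) (u i))"
  shows "(\<Sum>i=1..n. (norm (x i + \<theta> *\<^sub>R (z (Suc i) - z i)))\<^sup>2)
    \<le> (\<Sum>i=1..n. (norm (x i))\<^sup>2)
       - \<theta> * min (1 - \<theta>) (2 * a * \<mu>) / (real n * (real n + 1)) * (\<Sum>i=1..n. (norm (z i))\<^sup>2)"
proof -
  have "0 \<le> \<theta> * (norm (z 1 - z (Suc n)))\<^sup>2" using params by simp
  then show ?thesis
    using malitsky_tam_norm_identity[OF eqs \<open>1 \<le> n\<close>, of \<theta>]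
      malitsky_tam_dissipation_bound[OF \<open>1 \<le> n\<close> params mono strong]
    by linarith
qed

(* \<kappa> is the rate of malitsky_tam_decrease, and (real n)\<^sup>2 * (1 + b * L)\<^sup>2 bounds the constant of
   malitsky_tam_sum_norm_le for all \<gamma> \<le> b. *)
definition mt_rate :: "nat \<Rightarrow> real \<Rightarrow> real \<Rightarrow> real \<Rightarrow> real \<Rightarrow> real \<Rightarrow> real" where
  "mt_rate n \<theta> \<mu> L a b =
     (let \<kappa> = \<theta> * min (1 - \<theta>) (2 * a * \<mu>) / (real n * (real n + 1))
      in sqrt (1 - \<kappa> / max ((real n)\<^sup>2 * (1 + b * L)\<^sup>2) \<kappa>))"

lemma mt_rate_bounds:
  assumes "1 \<le> n" "0 < \<theta>" "\<theta> < 1" "0 < \<mu>" "0 < a"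
  shows "0 \<le> mt_rate n \<theta> \<mu> L a b" "mt_rate n \<theta> \<mu> L a b < 1"
proof -
  define \<kappa> where "\<kappa> = \<theta> * min (1 - \<theta>) (2 * a * \<mu>) / (real n * (real n + 1))"
  have "0 < \<kappa>" using assms by (simp add: \<kappa>_def)
  then have "0 < \<kappa> / max ((real n)\<^sup>2 * (1 + b * L)\<^sup>2) \<kappa>" "\<kappa> / max ((real n)\<^sup>2 * (1 + b * L)\<^sup>2) \<kappa> \<le> 1"
    by auto
  then show "0 \<le> mt_rate n \<theta> \<mu> L a b" "mt_rate n \<theta> \<mu> L a b < 1"
    by (simp_all add: mt_rate_def \<kappa>_def[symmetric] Let_def)
qed

lemma malitsky_tam_equations_contraction:
  fixes x z u :: "nat \<Rightarrow> 'a::real_inner"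
  assumes eqs: "malitsky_tam_equations n \<gamma> x z u" and "1 \<le> n"
    and params: "0 < \<theta>" "\<theta> < 1" "0 < a" "a \<le> \<gamma>" "0 < \<mu>" and "\<gamma> \<le> b" "0 \<le> L"
    and mono: "\<And>i. i \<in> {1..Suc n} \<Longrightarrow> 0 \<le> inner (z i) (u i)"
    and strong: "\<mu> * (norm (z (Suc n)))\<^sup>2 \<le> inner (z (Suc n)) (u (Suc n))
                 \<or> (\<forall>i\<in>{1..n}. \<mu> * (norm (z i))\<^sup>2 \<le> inner (z i) (u i))"
    and lip: "\<And>i. i \<in> {1..n} \<Longrightarrow> norm (u i) \<le> L * norm (z i)"
  shows "sqrt (\<Sum>i=1..n. (norm (x i + \<theta> *\<^sub>R (z (Suc i) - z i)))\<^sup>2)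
    \<le> mt_rate n \<theta> \<mu> L a b * sqrt (\<Sum>i=1..n. (norm (x i))\<^sup>2)"
proof -
  define \<kappa> where "\<kappa> = \<theta> * min (1 - \<theta>) (2 * a * \<mu>) / (real n * (real n + 1))"
  define M where "M = (real n)\<^sup>2 * (1 + b * L)\<^sup>2"
  have "(\<Sum>i=1..n. (norm (x i))\<^sup>2) \<le> (real n)\<^sup>2 * (1 + \<gamma> * L)\<^sup>2 * (\<Sum>i=1..n. (norm (z i))\<^sup>2)"
    using malitsky_tam_sum_norm_le[OF eqs lip] params \<open>0 \<le> L\<close> by simp
  also have "\<dots> \<le> M * (\<Sum>i=1..n. (norm (z i))\<^sup>2)"
    unfolding M_def using params \<open>\<gamma> \<le> b\<close> \<open>0 \<le> L\<close>
    by (intro mult_right_mono mult_left_mono power_mono add_left_mono) (auto intro: sum_nonneg)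
  finally have "(\<Sum>i=1..n. (norm (x i + \<theta> *\<^sub>R (z (Suc i) - z i)))\<^sup>2)
      \<le> (1 - \<kappa> / max M \<kappa>) * (\<Sum>i=1..n. (norm (x i))\<^sup>2)"
    using malitsky_tam_decrease[OF eqs \<open>1 \<le> n\<close> params mono strong] params \<open>1 \<le> n\<close>
    by (intro contraction_factor_of_decrease) (auto simp: \<kappa>_def intro: sum_nonneg)
  then show ?thesis
    by (simp add: mt_rate_def Let_def \<kappa>_def M_def real_sqrt_mult[symmetric])
qed

section \<open>The Malitsky--Tam operator\<close>

lemma mt_z_eq_resolvent:
  fixes A :: "nat \<Rightarrow> 'a::real_vector \<Rightarrow> 'a set" and \<gamma> :: real and x :: "nat \<Rightarrow> 'a"
  assumes "1 \<le> n" "i \<in> {1..Suc n}"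
  defines "z \<equiv> mt_z (Suc n) \<gamma> A x"
  shows "z i = resolvent \<gamma> (A i)
    (if i = 1 then x 1 else if i = Suc n then z 1 + z n - x n else z (i - 1) + x i - x (i - 1))"
proof -
  have pre: "z j = mt_zpre \<gamma> A x j" if "j \<le> n" for j
    using that by (simp add: z_def mt_z_def)
  have "i = 1 \<or> i = Suc n \<or> (\<exists>j. i = Suc j \<and> 1 \<le> j \<and> j < n)"
    using assms(2) by (cases i) auto
  then consider "i = 1" | "i = Suc n" | j where "i = Suc j" "1 \<le> j" "j < n" by blast
  then show ?thesis
  proof cases
    case 1
    then show ?thesis using pre[of 1] assms(1) by simp
  next
    case 2
    then show ?thesis using pre[of 1] pre[of n] assms(1) by (simp add: z_def mt_z_def)
  next
    case 3
    then show ?thesis using pre[of j] pre[of "Suc j"] by simp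
  qed
qed

lemma malitsky_tam_equations_mt_z:
  fixes A :: "nat \<Rightarrow> 'a::{real_inner,complete_space} \<Rightarrow> 'a set"
  assumes "1 \<le> n" "0 < \<gamma>" "\<forall>i\<in>{1..Suc n}. maximally_monotone_op (A i)"
  obtains u where "\<forall>i\<in>{1..Suc n}. u i \<in> A i (mt_z (Suc n) \<gamma> A x i)"
    and "malitsky_tam_equations n \<gamma> x (mt_z (Suc n) \<gamma> A x) u"
proof
  define z where "z = mt_z (Suc n) \<gamma> A x"
  define p where "p i = (if i = 1 then x 1 else if i = Suc n then z 1 + z n - x n else z (i - 1) + x i - x (i - 1))"
    for i
  define u where "u i = (1 / \<gamma>) *\<^sub>R (p i - z i)" for i
  show "\<forall>i\<in>{1..Suc n}. u i \<in> A i (z i)"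
    using resolvent_residual_mem assms(2,3) mt_z_eq_resolvent[OF assms(1)]
    unfolding u_def p_def z_def by metis
  have p: "p i = z i + \<gamma> *\<^sub>R u i" for i using assms(2) by (simp add: u_def)
  have "z (i - 1) + x i - x (i - 1) = z i + \<gamma> *\<^sub>R u i" if "i \<in> {2..n}" for i
    using p[of i] that by (simp add: p_def)
  then show "malitsky_tam_equations n \<gamma> x z u"
    using p[of 1] p[of "Suc n"] assms(1) unfolding malitsky_tam_equations_def by (simp add: p_def)
qed

lemma malitsky_tam_difference_equations:
  fixes A :: "nat \<Rightarrow> 'a::{real_inner,complete_space} \<Rightarrow> 'a set" and x y :: "nat \<Rightarrow> 'a"
  assumes "1 \<le> n" "0 < \<gamma>"
    and max: "\<forall>i\<in>{1..Suc n}. maximally_monotone_op (A i)"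
    and lip: "\<forall>i\<in>{1..n}. \<exists>f. A i = (\<lambda>x. {f x}) \<and> L-lipschitz_on UNIV f"
    and strong: "strongly_monotone_op \<mu> (A (Suc n)) \<or> (\<forall>i\<in>{1..n}. strongly_monotone_op \<mu> (A i))"
  defines "z \<equiv> \<lambda>i. mt_z (Suc n) \<gamma> A x i - mt_z (Suc n) \<gamma> A y i"
  obtains u where "malitsky_tam_equations n \<gamma> (\<lambda>i. x i - y i) z u"
    and "\<And>i. i \<in> {1..Suc n} \<Longrightarrow> 0 \<le> inner (z i) (u i)"
    and "\<mu> * (norm (z (Suc n)))\<^sup>2 \<le> inner (z (Suc n)) (u (Suc n))
           \<or> (\<forall>i\<in>{1..n}. \<mu> * (norm (z i))\<^sup>2 \<le> inner (z i) (u i))"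
    and "\<And>i. i \<in> {1..n} \<Longrightarrow> norm (u i) \<le> L * norm (z i)"
proof -
  obtain ux where ux: "\<forall>i\<in>{1..Suc n}. ux i \<in> A i (mt_z (Suc n) \<gamma> A x i)"
    and eqs_x: "malitsky_tam_equations n \<gamma> x (mt_z (Suc n) \<gamma> A x) ux"
    using malitsky_tam_equations_mt_z[OF assms(1,2) max] by blast
  obtain uy where uy: "\<forall>i\<in>{1..Suc n}. uy i \<in> A i (mt_z (Suc n) \<gamma> A y i)"
    and eqs_y: "malitsky_tam_equations n \<gamma> y (mt_z (Suc n) \<gamma> A y) uy"
    using malitsky_tam_equations_mt_z[OF assms(1,2) max] by blast
  define u where "u i = ux i - uy i" for i
  have mem: "ux i \<in> A i (mt_z (Suc n) \<gamma> A x i)" "uy i \<in> A i (mt_z (Suc n) \<gamma> A y i)"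
    if "i \<in> {1..Suc n}" for i
    using ux uy that by auto
  have "malitsky_tam_equations n \<gamma> (\<lambda>i. x i - y i) z u"
    using malitsky_tam_equations_diff[OF eqs_x eqs_y] unfolding z_def u_def[abs_def] .
  moreover have "0 \<le> inner (z i) (u i)" if "i \<in> {1..Suc n}" for i
    using monotone_opD[OF _ mem[OF that]] max that
    by (simp add: maximally_monotone_op_def z_def u_def)
  moreover have strong_z: "\<mu> * (norm (z i))\<^sup>2 \<le> inner (z i) (u i)"
    if "strongly_monotone_op \<mu> (A i)" "i \<in> {1..Suc n}" for i
    using strongly_monotone_opD[OF that(1) mem[OF that(2)]] by (simp add: z_def u_def)
  have "\<mu> * (norm (z (Suc n)))\<^sup>2 \<le> inner (z (Suc n)) (u (Suc n))
          \<or> (\<forall>i\<in>{1..n}. \<mu> * (norm (z i))\<^sup>2 \<le> inner (z i) (u i))"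
    using strong
  proof
    assume "\<forall>i\<in>{1..n}. strongly_monotone_op \<mu> (A i)"
    then show ?thesis using strong_z by simp
  qed (simp add: strong_z)
  moreover have "norm (u i) \<le> L * norm (z i)" if i: "i \<in> {1..n}" for i
  proof -
    obtain f where f: "A i = (\<lambda>x. {f x})" "L-lipschitz_on UNIV f" using bspec[OF lip i] by blast
    have "i \<in> {1..Suc n}" using i by simp
    from mem[OF this] have "ux i = f (mt_z (Suc n) \<gamma> A x i)" "uy i = f (mt_z (Suc n) \<gamma> A y i)"
      unfolding f(1) by simp_all
    then show ?thesis using lipschitz_on_normD[OF f(2)] by (simp add: u_def z_def)
  qed
  ultimately show thesis by (rule that)
qed

lemma malitsky_tam_contraction:
  fixes A :: "nat \<Rightarrow> 'a::{real_inner,complete_space} \<Rightarrow> 'a set"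
  assumes "1 \<le> n" and params: "0 < \<theta>" "\<theta> < 1" "0 < a" "a \<le> \<gamma>" "0 < \<mu>" and "\<gamma> \<le> b" "0 \<le> L"
    and max: "\<forall>i\<in>{1..Suc n}. maximally_monotone_op (A i)"
    and lip: "\<forall>i\<in>{1..n}. \<exists>f. A i = (\<lambda>x. {f x}) \<and> L-lipschitz_on UNIV f"
    and strong: "strongly_monotone_op \<mu> (A (Suc n)) \<or> (\<forall>i\<in>{1..n}. strongly_monotone_op \<mu> (A i))"
  shows "prod_norm (Suc n) (\<lambda>i. malitsky_tam (Suc n) \<theta> \<gamma> A x i - malitsky_tam (Suc n) \<theta> \<gamma> A y i)
    \<le> mt_rate n \<theta> \<mu> L a b * prod_norm (Suc n) (\<lambda>i. x i - y i)"
proof -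
  have "0 < \<gamma>" using params by linarith
  define z where "z i = mt_z (Suc n) \<gamma> A x i - mt_z (Suc n) \<gamma> A y i" for i
  obtain u where eqs: "malitsky_tam_equations n \<gamma> (\<lambda>i. x i - y i) z u"
    and mono: "\<And>i. i \<in> {1..Suc n} \<Longrightarrow> 0 \<le> inner (z i) (u i)"
    and strong': "\<mu> * (norm (z (Suc n)))\<^sup>2 \<le> inner (z (Suc n)) (u (Suc n))
                 \<or> (\<forall>i\<in>{1..n}. \<mu> * (norm (z i))\<^sup>2 \<le> inner (z i) (u i))"
    and lip': "\<And>i. i \<in> {1..n} \<Longrightarrow> norm (u i) \<le> L * norm (z i)"
    using malitsky_tam_difference_equations[OF \<open>1 \<le> n\<close> \<open>0 < \<gamma>\<close> max lip strong, of x y]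
    unfolding z_def[abs_def] by blast
  have "malitsky_tam (Suc n) \<theta> \<gamma> A x i - malitsky_tam (Suc n) \<theta> \<gamma> A y i
      = (x i - y i) + \<theta> *\<^sub>R (z (Suc i) - z i)" if "i \<in> {1..n}" for i
    using that by (simp add: malitsky_tam_def z_def algebra_simps)
  then have "prod_norm (Suc n) (\<lambda>i. malitsky_tam (Suc n) \<theta> \<gamma> A x i - malitsky_tam (Suc n) \<theta> \<gamma> A y i)
      = sqrt (\<Sum>i=1..n. (norm ((x i - y i) + \<theta> *\<^sub>R (z (Suc i) - z i)))\<^sup>2)"
    unfolding prod_norm_def by (intro arg_cong[where f = sqrt] sum.cong) simp_all
  also have "\<dots> \<le> mt_rate n \<theta> \<mu> L a b * sqrt (\<Sum>i=1..n. (norm (x i - y i))\<^sup>2)"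
    by (rule malitsky_tam_equations_contraction[OF eqs \<open>1 \<le> n\<close> params \<open>\<gamma> \<le> b\<close> \<open>0 \<le> L\<close> mono strong' lip'])
  finally show ?thesis by (simp add: prod_norm_def)
qed

theorem lemma5p2:
  fixes A :: "nat \<Rightarrow> 'a::{real_inner, complete_space} \<Rightarrow> 'a set"
    and N :: nat and \<theta> \<mu> L a b :: real
  assumes "N \<ge> 2"
    and "0 < \<theta>" "\<theta> < 1"
    and "0 < a" "a \<le> b"
    and "0 < \<mu>"
    and "((\<forall>i\<in>{1..N - 1}. \<exists>f. A i = (\<lambda>x. {f x}) \<and> monotone_op (A i) \<and> L-lipschitz_on UNIV f)
           \<and> maximally_strongly_monotone_op \<mu> (A N))
       \<or> ((\<forall>i\<in>{1..N - 1}. \<exists>f. A i = (\<lambda>x. {f x}) \<and> maximally_strongly_monotone_op \<mu> (A i)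
                              \<and> L-lipschitz_on UNIV f)
           \<and> maximally_monotone_op (A N))"
  shows "\<exists>\<beta>. 0 \<le> \<beta> \<and> \<beta> < 1 \<and>
           (\<forall>\<gamma>\<in>{a..b}. \<forall>x y.
              prod_norm N (\<lambda>i. malitsky_tam N \<theta> \<gamma> A x i - malitsky_tam N \<theta> \<gamma> A y i)
                \<le> \<beta> * prod_norm N (\<lambda>i. x i - y i))"
proof -
  obtain n where N: "N = Suc n" and "1 \<le> n" using assms(1) by (cases N) auto
  have lip: "\<forall>i\<in>{1..n}. \<exists>f. A i = (\<lambda>x. {f x}) \<and> L-lipschitz_on UNIV f"
    using assms(7) by (auto simp: N)
  then have "0 \<le> L" using \<open>1 \<le> n\<close> by (auto dest: lipschitz_on_nonneg)
  have "maximally_monotone_op (A i)" if i: "i \<in> {1..n}" for i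
    using assms(7)
  proof
    assume "(\<forall>i\<in>{1..N - 1}. \<exists>f. A i = (\<lambda>x. {f x}) \<and> monotone_op (A i) \<and> L-lipschitz_on UNIV f)
      \<and> maximally_strongly_monotone_op \<mu> (A N)"
    then have "\<exists>f. A i = (\<lambda>x. {f x}) \<and> monotone_op (A i) \<and> L-lipschitz_on UNIV f"
      using i by (simp add: N)
    then obtain f where "A i = (\<lambda>x. {f x})" "monotone_op (A i)" "L-lipschitz_on UNIV f" by blast
    then show ?thesis using maximally_monotone_op_continuous lipschitz_on_continuous_on by metis
  qed (use i in \<open>auto simp: N maximally_strongly_monotone_op_def\<close>)
  then have max: "\<forall>i\<in>{1..Suc n}. maximally_monotone_op (A i)"
    using assms(7) by (auto simp: N maximally_strongly_monotone_op_def le_Suc_eq)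
  have strong: "strongly_monotone_op \<mu> (A (Suc n)) \<or> (\<forall>i\<in>{1..n}. strongly_monotone_op \<mu> (A i))"
    using assms(7) by (auto simp: N maximally_strongly_monotone_op_def)
  show ?thesis
    using mt_rate_bounds[OF \<open>1 \<le> n\<close> assms(2,3,6,4)]
      malitsky_tam_contraction[OF \<open>1 \<le> n\<close> assms(2,3,4) _ assms(6) _ \<open>0 \<le> L\<close> max lip strong]
    by (intro exI[of _ "mt_rate n \<theta> \<mu> L a b"]) (auto simp: N)
qed

end
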